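(* Let $\mathcal{C},\mathcal{D}$ be categories, $R$ a monad on $\mathcal{C}\times\mathcal{D}$ and $A\in\mathcal{D}$. Let $R_{A,1}$ be the monad on $\mathcal{C}$ with $R_{A,1}(X)=\mathrm{pr}_{\mathcal{C}}(R(X,A))$, unit $\mathrm{pr}_{\mathcal{C}}(\eta_{(X,A)})$ and $\mathrm{bind}'(f)=\mathrm{pr}_{\mathcal{C}}(\mathrm{bind}(f,\mathrm{pr}_{\mathcal{D}}(\eta_{(X',A)})))$ for $f:X\to R_{A,1}(X')$. Then the functor $M_{A,1}:\mathcal{C}\to\mathcal{C}\times\mathcal{D}$, $X\mapsto R(X,A)$, together with the morphisms $$\rho(f):=\mathrm{bind}(f,\mathrm{pr}_{\mathcal{D}}(\eta_{(X',A)})):R(X,A)\to R(X',A)\qquad(f:X\to R_{A,1}(X')),$$ is a left $R_{A,1}$-module with values in $\mathcal{C}\times\mathcal{D}$.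
   Context: Monads are given in Kleisli form: $R(X)$, $\eta_X:X\to R(X)$, and $\mathrm{bind}(f):R(X)\to R(Y)$ for $f:X\to R(Y)$, satisfying $\mathrm{bind}(\eta_X)=\mathrm{id}$, $\mathrm{bind}(f)\circ\eta_X=f$, $\mathrm{bind}(\mathrm{bind}(g)\circ f)=\mathrm{bind}(g)\circ\mathrm{bind}(f)$. For a monad $R'$ on $\mathcal{C}$, a left $R'$-module with values in $\mathcal{E}$ is a functor $LM:\mathcal{C}\to\mathcal{E}$ with morphisms $\rho(f):LM(X)\to LM(X')$ for every $f:X\to R'(X')$ such that $\rho(\eta'_X)=\mathrm{id}$ and $\rho(g)\circ\rho(f)=\rho(\mathrm{bind}'(g)\circ f)$. $(f,\mathrm{pr}_{\mathcal{D}}(\eta_{(X',A)}))$ denotes the morphism $(X,A)\to R(X',A)$ in $\mathcal{C}\times\mathcal{D}$ with these two components. *)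

theory Defs
  imports Main
begin

text \<open>Categories with explicit objects, hom-sets and typed composition.
  cmp C X Y Z g f is the composite g o f of f : X -> Y and g : Y -> Z.\<close>

record ('o, 'a) cat =
  Ob :: "'o set"
  Hom :: "'o \<Rightarrow> 'o \<Rightarrow> 'a set"
  cmp :: "'o \<Rightarrow> 'o \<Rightarrow> 'o \<Rightarrow> 'a \<Rightarrow> 'a \<Rightarrow> 'a"
  ident :: "'o \<Rightarrow> 'a"

definition category :: "('o, 'a) cat \<Rightarrow> bool" where
  "category C \<longleftrightarrow>
     (\<forall>X\<in>Ob C. ident C X \<in> Hom C X X) \<and>
     (\<forall>X\<in>Ob C. \<forall>Y\<in>Ob C. \<forall>Z\<in>Ob C. \<forall>f g.
        f \<in> Hom C X Y \<longrightarrow> g \<in> Hom C Y Z \<longrightarrow> cmp C X Y Z g f \<in> Hom C X Z) \<and>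
     (\<forall>X\<in>Ob C. \<forall>Y\<in>Ob C. \<forall>f. f \<in> Hom C X Y \<longrightarrow>
        cmp C X Y Y (ident C Y) f = f \<and> cmp C X X Y f (ident C X) = f) \<and>
     (\<forall>W\<in>Ob C. \<forall>X\<in>Ob C. \<forall>Y\<in>Ob C. \<forall>Z\<in>Ob C. \<forall>f g h.
        f \<in> Hom C W X \<longrightarrow> g \<in> Hom C X Y \<longrightarrow> h \<in> Hom C Y Z \<longrightarrow>
        cmp C W Y Z h (cmp C W X Y g f) = cmp C W X Z (cmp C X Y Z h g) f)"

definition prod_cat :: "('o, 'a) cat \<Rightarrow> ('p, 'b) cat \<Rightarrow> ('o \<times> 'p, 'a \<times> 'b) cat" where
  "prod_cat C D =
     \<lparr> Ob = Ob C \<times> Ob D,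
       Hom = (\<lambda>(X, A) (Y, B). Hom C X Y \<times> Hom D A B),
       cmp = (\<lambda>(X, A) (Y, B) (Z, E) (g, g') (f, f'). (cmp C X Y Z g f, cmp D A B E g' f')),
       ident = (\<lambda>(X, A). (ident C X, ident D A)) \<rparr>"

definition kleisli_monad ::
  "('o, 'a) cat \<Rightarrow> ('o \<Rightarrow> 'o) \<Rightarrow> ('o \<Rightarrow> 'a) \<Rightarrow> ('o \<Rightarrow> 'o \<Rightarrow> 'a \<Rightarrow> 'a) \<Rightarrow> bool" where
  "kleisli_monad K R eta bind \<longleftrightarrow>
     (\<forall>X\<in>Ob K. R X \<in> Ob K \<and> eta X \<in> Hom K X (R X)) \<and>
     (\<forall>X\<in>Ob K. \<forall>Y\<in>Ob K. \<forall>f. f \<in> Hom K X (R Y) \<longrightarrow> bind X Y f \<in> Hom K (R X) (R Y)) \<and>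
     (\<forall>X\<in>Ob K. bind X X (eta X) = ident K (R X)) \<and>
     (\<forall>X\<in>Ob K. \<forall>Y\<in>Ob K. \<forall>f. f \<in> Hom K X (R Y) \<longrightarrow>
        cmp K X (R X) (R Y) (bind X Y f) (eta X) = f) \<and>
     (\<forall>X\<in>Ob K. \<forall>Y\<in>Ob K. \<forall>Z\<in>Ob K. \<forall>f g.
        f \<in> Hom K X (R Y) \<longrightarrow> g \<in> Hom K Y (R Z) \<longrightarrow>
        bind X Z (cmp K X (R Y) (R Z) (bind Y Z g) f)
          = cmp K (R X) (R Y) (R Z) (bind Y Z g) (bind X Y f))"

definition is_functor ::
  "('o, 'a) cat \<Rightarrow> ('p, 'b) cat \<Rightarrow> ('o \<Rightarrow> 'p) \<Rightarrow> ('o \<Rightarrow> 'o \<Rightarrow> 'a \<Rightarrow> 'b) \<Rightarrow> bool" where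
  "is_functor C E Fo Fa \<longleftrightarrow>
     (\<forall>X\<in>Ob C. Fo X \<in> Ob E) \<and>
     (\<forall>X\<in>Ob C. \<forall>Y\<in>Ob C. \<forall>u. u \<in> Hom C X Y \<longrightarrow> Fa X Y u \<in> Hom E (Fo X) (Fo Y)) \<and>
     (\<forall>X\<in>Ob C. Fa X X (ident C X) = ident E (Fo X)) \<and>
     (\<forall>X\<in>Ob C. \<forall>Y\<in>Ob C. \<forall>Z\<in>Ob C. \<forall>u v.
        u \<in> Hom C X Y \<longrightarrow> v \<in> Hom C Y Z \<longrightarrow>
        Fa X Z (cmp C X Y Z v u) = cmp E (Fo X) (Fo Y) (Fo Z) (Fa Y Z v) (Fa X Y u))"

definition left_module ::
  "('o, 'a) cat \<Rightarrow> ('o \<Rightarrow> 'o) \<Rightarrow> ('o \<Rightarrow> 'a) \<Rightarrow> ('o \<Rightarrow> 'o \<Rightarrow> 'a \<Rightarrow> 'a)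
   \<Rightarrow> ('p, 'b) cat \<Rightarrow> ('o \<Rightarrow> 'p) \<Rightarrow> ('o \<Rightarrow> 'o \<Rightarrow> 'a \<Rightarrow> 'b) \<Rightarrow> ('o \<Rightarrow> 'o \<Rightarrow> 'a \<Rightarrow> 'b) \<Rightarrow> bool" where
  "left_module C R' eta' bind' E LMo LMa rho \<longleftrightarrow>
     is_functor C E LMo LMa \<and>
     (\<forall>X\<in>Ob C. \<forall>X'\<in>Ob C. \<forall>f. f \<in> Hom C X (R' X') \<longrightarrow> rho X X' f \<in> Hom E (LMo X) (LMo X')) \<and>
     (\<forall>X\<in>Ob C. rho X X (eta' X) = ident E (LMo X)) \<and>
     (\<forall>X\<in>Ob C. \<forall>X'\<in>Ob C. \<forall>X''\<in>Ob C. \<forall>f g.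
        f \<in> Hom C X (R' X') \<longrightarrow> g \<in> Hom C X' (R' X'') \<longrightarrow>
        cmp E (LMo X) (LMo X') (LMo X'') (rho X' X'' g) (rho X X' f)
          = rho X X'' (cmp C X (R' X') (R' X'') (bind' X' X'' g) f))"

definition RA1 :: "('o \<times> 'p \<Rightarrow> 'o \<times> 'p) \<Rightarrow> 'p \<Rightarrow> 'o \<Rightarrow> 'o" where
  "RA1 R A X = fst (R (X, A))"

definition etaA1 :: "('o \<times> 'p \<Rightarrow> 'a \<times> 'b) \<Rightarrow> 'p \<Rightarrow> 'o \<Rightarrow> 'a" where
  "etaA1 eta A X = fst (eta (X, A))"

definition bindA1 ::
  "('o \<times> 'p \<Rightarrow> 'a \<times> 'b) \<Rightarrow> ('o \<times> 'p \<Rightarrow> 'o \<times> 'p \<Rightarrow> 'a \<times> 'b \<Rightarrow> 'a \<times> 'b) \<Rightarrow> 'p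
   \<Rightarrow> 'o \<Rightarrow> 'o \<Rightarrow> 'a \<Rightarrow> 'a" where
  "bindA1 eta bind A X X' f = fst (bind (X, A) (X', A) (f, snd (eta (X', A))))"

text \<open>The functor M_{A,1} : C -> C x D, X |-> R(X,A); on arrows u : X -> Y it is
  the functorial action of R on (u, id_A), i.e. bind(eta_(Y,A) o (u, id_A)).\<close>

definition MA1_ob :: "('o \<times> 'p \<Rightarrow> 'o \<times> 'p) \<Rightarrow> 'p \<Rightarrow> 'o \<Rightarrow> 'o \<times> 'p" where
  "MA1_ob R A X = R (X, A)"

definition MA1_arr ::
  "('o, 'a) cat \<Rightarrow> ('p, 'b) cat \<Rightarrow> ('o \<times> 'p \<Rightarrow> 'o \<times> 'p) \<Rightarrow> ('o \<times> 'p \<Rightarrow> 'a \<times> 'b)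
   \<Rightarrow> ('o \<times> 'p \<Rightarrow> 'o \<times> 'p \<Rightarrow> 'a \<times> 'b \<Rightarrow> 'a \<times> 'b) \<Rightarrow> 'p \<Rightarrow> 'o \<Rightarrow> 'o \<Rightarrow> 'a \<Rightarrow> 'a \<times> 'b" where
  "MA1_arr C D R eta bind A X Y u =
     bind (X, A) (Y, A) (cmp (prod_cat C D) (X, A) (Y, A) (R (Y, A)) (eta (Y, A)) (u, ident D A))"

definition rhoA1 ::
  "('o \<times> 'p \<Rightarrow> 'a \<times> 'b) \<Rightarrow> ('o \<times> 'p \<Rightarrow> 'o \<times> 'p \<Rightarrow> 'a \<times> 'b \<Rightarrow> 'a \<times> 'b) \<Rightarrow> 'p
   \<Rightarrow> 'o \<Rightarrow> 'o \<Rightarrow> 'a \<Rightarrow> 'a \<times> 'b" where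
  "rhoA1 eta bind A X X' f = bind (X, A) (X', A) (f, snd (eta (X', A)))"

end

theory Submission
  imports Defs
begin

text \<open>\<open>M\<^sub>A\<^sub>,\<^sub>1\<close> is the slice functor \<open>X \<mapsto> (X, A)\<close> followed by the functor
  underlying \<open>R\<close>. The module laws are the monad laws of \<open>R\<close> restricted to
  arrows whose \<open>\<D>\<close>-component is the unit \<open>pr\<^sub>\<D> \<eta>\<^sub>(\<^sub>X\<^sub>,\<^sub>A\<^sub>)\<close>: the \<open>\<D>\<close>-component of the left
  unit law says that Kleisli composition of two such arrows is again such an arrow, whose
  \<open>\<C>\<close>-component is the Kleisli composite in \<open>R\<^sub>A\<^sub>,\<^sub>1\<close>.\<close>

lemma Ob_prod_cat: "Ob (prod_cat C D) = Ob C \<times> Ob D"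
  by (simp add: prod_cat_def)

lemma Hom_prod_cat:
  "Hom (prod_cat C D) x y = Hom C (fst x) (fst y) \<times> Hom D (snd x) (snd y)"
  by (simp add: prod_cat_def split: prod.splits)

lemma cmp_prod_cat:
  "cmp (prod_cat C D) x y z g f =
     (cmp C (fst x) (fst y) (fst z) (fst g) (fst f), cmp D (snd x) (snd y) (snd z) (snd g) (snd f))"
  by (simp add: prod_cat_def split: prod.splits)

lemma ident_prod_cat: "ident (prod_cat C D) x = (ident C (fst x), ident D (snd x))"
  by (simp add: prod_cat_def split: prod.splits)

lemma category_prod_cat: "category C \<Longrightarrow> category D \<Longrightarrow> category (prod_cat C D)"
  unfolding category_def Ob_prod_cat Hom_prod_cat cmp_prod_cat ident_prod_cat
  by (simp add: mem_Times_iff)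

lemma
  assumes "category C"
  shows category_ident_hom: "X \<in> Ob C \<Longrightarrow> ident C X \<in> Hom C X X"
    and category_cmp_hom: "\<lbrakk>X \<in> Ob C; Y \<in> Ob C; Z \<in> Ob C; f \<in> Hom C X Y; g \<in> Hom C Y Z\<rbrakk>
           \<Longrightarrow> cmp C X Y Z g f \<in> Hom C X Z"
    and category_ident_left: "\<lbrakk>X \<in> Ob C; Y \<in> Ob C; f \<in> Hom C X Y\<rbrakk>
           \<Longrightarrow> cmp C X Y Y (ident C Y) f = f"
    and category_ident_right: "\<lbrakk>X \<in> Ob C; Y \<in> Ob C; f \<in> Hom C X Y\<rbrakk>
           \<Longrightarrow> cmp C X X Y f (ident C X) = f"
    and category_assoc: "\<lbrakk>W \<in> Ob C; X \<in> Ob C; Y \<in> Ob C; Z \<in> Ob C;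
             f \<in> Hom C W X; g \<in> Hom C X Y; h \<in> Hom C Y Z\<rbrakk>
           \<Longrightarrow> cmp C W Y Z h (cmp C W X Y g f) = cmp C W X Z (cmp C X Y Z h g) f"
  using assms unfolding category_def by blast+

lemma
  assumes "kleisli_monad K R eta bind"
  shows kleisli_monad_ob: "X \<in> Ob K \<Longrightarrow> R X \<in> Ob K"
    and kleisli_monad_unit_hom: "X \<in> Ob K \<Longrightarrow> eta X \<in> Hom K X (R X)"
    and kleisli_monad_bind_hom: "\<lbrakk>X \<in> Ob K; Y \<in> Ob K; f \<in> Hom K X (R Y)\<rbrakk>
           \<Longrightarrow> bind X Y f \<in> Hom K (R X) (R Y)"
    and kleisli_monad_bind_unit: "X \<in> Ob K \<Longrightarrow> bind X X (eta X) = ident K (R X)"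
    and kleisli_monad_bind_comp_unit: "\<lbrakk>X \<in> Ob K; Y \<in> Ob K; f \<in> Hom K X (R Y)\<rbrakk>
           \<Longrightarrow> cmp K X (R X) (R Y) (bind X Y f) (eta X) = f"
    and kleisli_monad_bind_assoc: "\<lbrakk>X \<in> Ob K; Y \<in> Ob K; Z \<in> Ob K;
             f \<in> Hom K X (R Y); g \<in> Hom K Y (R Z)\<rbrakk>
           \<Longrightarrow> bind X Z (cmp K X (R Y) (R Z) (bind Y Z g) f)
                 = cmp K (R X) (R Y) (R Z) (bind Y Z g) (bind X Y f)"
  using assms unfolding kleisli_monad_def by blast+

lemma is_functor_comp:
  assumes F: "is_functor C E Fo Fa" and G: "is_functor E G Go Ga"
  shows "is_functor C G (Go \<circ> Fo) (\<lambda>X Y u. Ga (Fo X) (Fo Y) (Fa X Y u))"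
  using F G unfolding is_functor_def by simp

lemma is_functor_slice:
  assumes "category D" and "A \<in> Ob D"
  shows "is_functor C (prod_cat C D) (\<lambda>X. (X, A)) (\<lambda>X Y u. (u, ident D A))"
proof -
  have "ident D A \<in> Hom D A A" and "cmp D A A A (ident D A) (ident D A) = ident D A"
    using category_ident_hom[OF assms] category_ident_left[OF assms(1) assms(2) assms(2)]
    by blast+
  with assms(2) show ?thesis
    unfolding is_functor_def Ob_prod_cat Hom_prod_cat cmp_prod_cat ident_prod_cat
    by auto
qed

lemma kleisli_monad_is_functor:
  assumes K: "category K" and R: "kleisli_monad K R eta bind"
  shows "is_functor K K R (\<lambda>X Y u. bind X Y (cmp K X Y (R Y) (eta Y) u))"
  unfolding is_functor_def
proof (intro conjI ballI allI impI)
  fix X assume X: "X \<in> Ob K"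
  show "R X \<in> Ob K" using kleisli_monad_ob[OF R X] .
  show "bind X X (cmp K X X (R X) (eta X) (ident K X)) = ident K (R X)"
    using category_ident_right[OF K X kleisli_monad_ob[OF R X] kleisli_monad_unit_hom[OF R X]]
      kleisli_monad_bind_unit[OF R X] by simp
next
  fix X Y u assume "X \<in> Ob K" "Y \<in> Ob K" "u \<in> Hom K X Y"
  then show "bind X Y (cmp K X Y (R Y) (eta Y) u) \<in> Hom K (R X) (R Y)"
    by (intro kleisli_monad_bind_hom[OF R] category_cmp_hom[OF K]
        kleisli_monad_ob[OF R] kleisli_monad_unit_hom[OF R])
next
  fix X Y Z u v assume X: "X \<in> Ob K" and Y: "Y \<in> Ob K" and Z: "Z \<in> Ob K"
    and u: "u \<in> Hom K X Y" and v: "v \<in> Hom K Y Z"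
  note RY = kleisli_monad_ob[OF R Y] and RZ = kleisli_monad_ob[OF R Z]
  note eY = kleisli_monad_unit_hom[OF R Y] and eZ = kleisli_monad_unit_hom[OF R Z]
  define g where "g = cmp K Y Z (R Z) (eta Z) v"
  have g: "g \<in> Hom K Y (R Z)" unfolding g_def by (rule category_cmp_hom[OF K Y Z RZ v eZ])
  have bg: "bind Y Z g \<in> Hom K (R Y) (R Z)" by (rule kleisli_monad_bind_hom[OF R Y Z g])
  have "cmp K (R X) (R Y) (R Z) (bind Y Z g) (bind X Y (cmp K X Y (R Y) (eta Y) u))
      = bind X Z (cmp K X (R Y) (R Z) (bind Y Z g) (cmp K X Y (R Y) (eta Y) u))"
    using kleisli_monad_bind_assoc[OF R X Y Z category_cmp_hom[OF K X Y RY u eY] g] by simp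
  also have "cmp K X (R Y) (R Z) (bind Y Z g) (cmp K X Y (R Y) (eta Y) u)
      = cmp K X Y (R Z) (cmp K Y (R Y) (R Z) (bind Y Z g) (eta Y)) u"
    by (rule category_assoc[OF K X Y RY RZ u eY bg])
  also have "\<dots> = cmp K X Y (R Z) g u"
    using kleisli_monad_bind_comp_unit[OF R Y Z g] by simp
  also have "\<dots> = cmp K X Z (R Z) (eta Z) (cmp K X Y Z v u)"
    unfolding g_def by (rule category_assoc[OF K X Y Z RZ u v eZ, symmetric])
  finally show "bind X Z (cmp K X Z (R Z) (eta Z) (cmp K X Y Z v u))
      = cmp K (R X) (R Y) (R Z) (bind Y Z (cmp K Y Z (R Z) (eta Z) v))
          (bind X Y (cmp K X Y (R Y) (eta Y) u))"
    unfolding g_def by simp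
qed

lemma is_functor_MA1:
  assumes "category C" and "category D" and R: "kleisli_monad (prod_cat C D) R eta bind"
    and "A \<in> Ob D"
  shows "is_functor C (prod_cat C D) (MA1_ob R A) (MA1_arr C D R eta bind A)"
  unfolding MA1_ob_def[abs_def] MA1_arr_def[abs_def]
  using is_functor_comp[OF is_functor_slice kleisli_monad_is_functor[OF category_prod_cat R]] assms
  by (simp add: comp_def)

context
  fixes C :: "('o, 'a) cat" and D :: "('p, 'b) cat"
    and R :: "'o \<times> 'p \<Rightarrow> 'o \<times> 'p"
    and eta :: "'o \<times> 'p \<Rightarrow> 'a \<times> 'b"
    and bind :: "'o \<times> 'p \<Rightarrow> 'o \<times> 'p \<Rightarrow> 'a \<times> 'b \<Rightarrow> 'a \<times> 'b"
    and A :: 'p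
  assumes R: "kleisli_monad (prod_cat C D) R eta bind" and A: "A \<in> Ob D"
begin

lemma slice_ob: "X \<in> Ob C \<Longrightarrow> (X, A) \<in> Ob (prod_cat C D)"
  using A by (simp add: Ob_prod_cat)

lemma pair_snd_unit_hom:
  assumes "X' \<in> Ob C" and "f \<in> Hom C X (RA1 R A X')"
  shows "(f, snd (eta (X', A))) \<in> Hom (prod_cat C D) (X, A) (R (X', A))"
  using assms kleisli_monad_unit_hom[OF R slice_ob[OF assms(1)]]
  by (simp add: Hom_prod_cat RA1_def mem_Times_iff)

lemma rhoA1_hom:
  assumes "X \<in> Ob C" and "X' \<in> Ob C" and "f \<in> Hom C X (RA1 R A X')"
  shows "rhoA1 eta bind A X X' f \<in> Hom (prod_cat C D) (MA1_ob R A X) (MA1_ob R A X')"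
  unfolding rhoA1_def MA1_ob_def
  using assms by (intro kleisli_monad_bind_hom[OF R] slice_ob pair_snd_unit_hom)

lemma rhoA1_unit:
  "X \<in> Ob C \<Longrightarrow> rhoA1 eta bind A X X (etaA1 eta A X) = ident (prod_cat C D) (MA1_ob R A X)"
  using kleisli_monad_bind_unit[OF R slice_ob] by (simp add: rhoA1_def etaA1_def MA1_ob_def)

lemma cmp_rhoA1_pair_snd_unit:
  assumes X': "X' \<in> Ob C" and X'': "X'' \<in> Ob C" and g: "g \<in> Hom C X' (RA1 R A X'')"
  shows "cmp (prod_cat C D) (X, A) (R (X', A)) (R (X'', A))
           (rhoA1 eta bind A X' X'' g) (f, snd (eta (X', A)))
         = (cmp C X (RA1 R A X') (RA1 R A X'') (bindA1 eta bind A X' X'' g) f, snd (eta (X'', A)))"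
proof -
  have "cmp (prod_cat C D) (X', A) (R (X', A)) (R (X'', A)) (rhoA1 eta bind A X' X'' g) (eta (X', A))
      = (g, snd (eta (X'', A)))"
    unfolding rhoA1_def
    by (rule kleisli_monad_bind_comp_unit[OF R slice_ob[OF X'] slice_ob[OF X'']
          pair_snd_unit_hom[OF X'' g]])
  then have "cmp D A (snd (R (X', A))) (snd (R (X'', A)))
      (snd (rhoA1 eta bind A X' X'' g)) (snd (eta (X', A))) = snd (eta (X'', A))"
    by (simp add: cmp_prod_cat)
  then show ?thesis
    by (simp add: cmp_prod_cat RA1_def bindA1_def rhoA1_def)
qed

lemma rhoA1_comp:
  assumes X: "X \<in> Ob C" and X': "X' \<in> Ob C" and X'': "X'' \<in> Ob C"
    and f: "f \<in> Hom C X (RA1 R A X')" and g: "g \<in> Hom C X' (RA1 R A X'')"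
  shows "cmp (prod_cat C D) (MA1_ob R A X) (MA1_ob R A X') (MA1_ob R A X'')
           (rhoA1 eta bind A X' X'' g) (rhoA1 eta bind A X X' f)
         = rhoA1 eta bind A X X'' (cmp C X (RA1 R A X') (RA1 R A X'') (bindA1 eta bind A X' X'' g) f)"
  using kleisli_monad_bind_assoc[OF R slice_ob[OF X] slice_ob[OF X'] slice_ob[OF X'']
      pair_snd_unit_hom[OF X' f] pair_snd_unit_hom[OF X'' g]]
    cmp_rhoA1_pair_snd_unit[OF X' X'' g]
  by (simp add: rhoA1_def MA1_ob_def)

end

theorem lemma2p5:
  fixes C :: "('o, 'a) cat" and D :: "('p, 'b) cat"
    and R :: "'o \<times> 'p \<Rightarrow> 'o \<times> 'p"
    and eta :: "'o \<times> 'p \<Rightarrow> 'a \<times> 'b"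
    and bind :: "'o \<times> 'p \<Rightarrow> 'o \<times> 'p \<Rightarrow> 'a \<times> 'b \<Rightarrow> 'a \<times> 'b"
    and A :: 'p
  assumes "category C" and "category D"
    and "kleisli_monad (prod_cat C D) R eta bind"
    and "A \<in> Ob D"
  shows "left_module C (RA1 R A) (etaA1 eta A) (bindA1 eta bind A)
           (prod_cat C D) (MA1_ob R A) (MA1_arr C D R eta bind A) (rhoA1 eta bind A)"
  unfolding left_module_def
  using is_functor_MA1[OF assms] rhoA1_hom[OF assms(3,4)] rhoA1_unit[OF assms(3,4)]
    rhoA1_comp[OF assms(3,4)]
  by blast

end
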